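(* There exists $\delta_0>0$ such that for every $0<\delta<\delta_0$ the following holds. If $\gamma:[0,n]\to\mathbb{H}^3$ is a $(1+\delta,\delta)$-quasigeodesic and $\bar\gamma$ is the geodesic segment with endpoints $\gamma(0)$ and $\gamma(n)$, then $\gamma([0,n])$ is contained in the $\eta$-neighborhood of $\bar\gamma$, where $\eta=5\delta^{1/5}$.
   Context: A $(1+\delta,\delta)$-quasigeodesic is a continuous map $\gamma:[0,n]\to\mathbb{H}^3$ with $\frac{|s-t|}{1+\delta}-\delta\le d_{\mathbb{H}^3}(\gamma(s),\gamma(t))\le(1+\delta)|s-t|+\delta$ for all $s,t\in[0,n]$. *)

theory Defs
  imports "HOL-Analysis.Analysis"
begin

text \<open>Hyperboloid model of hyperbolic 3-space: points (t, v) with t > 0, v in R^3,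
  and t^2 - |v|^2 = 1, inside R x R^3 with Minkowski bilinear form.\<close>

type_synonym pt4 = "real \<times> (real^3)"

definition mink :: "pt4 \<Rightarrow> pt4 \<Rightarrow> real" where
  "mink x y = fst x * fst y - (snd x \<bullet> snd y)"

definition H3 :: "pt4 set" where
  "H3 = {x. fst x > 0 \<and> mink x x = 1}"

definition hdist :: "pt4 \<Rightarrow> pt4 \<Rightarrow> real" where
  "hdist x y = arcosh (mink x y)"

definition quasigeodesic :: "real \<Rightarrow> real \<Rightarrow> (real \<Rightarrow> pt4) \<Rightarrow> bool" where
  "quasigeodesic \<delta> n \<gamma> \<longleftrightarrow>
     continuous_on {0..n} \<gamma> \<and> \<gamma> ` {0..n} \<subseteq> H3 \<and>
     (\<forall>s\<in>{0..n}. \<forall>t\<in>{0..n}.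
        \<bar>s - t\<bar> / (1 + \<delta>) - \<delta> \<le> hdist (\<gamma> s) (\<gamma> t) \<and>
        hdist (\<gamma> s) (\<gamma> t) \<le> (1 + \<delta>) * \<bar>s - t\<bar> + \<delta>)"

definition geodesic_segment :: "pt4 \<Rightarrow> pt4 \<Rightarrow> pt4 set" where
  "geodesic_segment p q =
     (if p = q then {p}
      else (let L = hdist p q in
        (\<lambda>t. (sinh ((1 - t) * L) / sinh L) *\<^sub>R p + (sinh (t * L) / sinh L) *\<^sub>R q) ` {0..1}))"

definition hnbhd :: "real \<Rightarrow> pt4 set \<Rightarrow> pt4 set" where
  "hnbhd \<eta> A = {x \<in> H3. \<exists>y\<in>A. hdist x y < \<eta>}"

end

theory Submission
  imports Defs
begin

text \<open>Fix a frame adapted to the geodesic through \<open>\<gamma>(0)\<close> and \<open>\<gamma>(n)\<close>. A point \<open>x\<close> has a height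
  \<open>h(x)\<close>, the squared \<open>sinh\<close> of its distance to the axis, and a projection parameter \<open>\<sigma>(x)\<close> on the
  axis, and \<open>cosh d(x, z)\<close> differs from \<open>\<surd>((1 + h(x))(1 + h(z))) cosh (\<sigma>(x) - \<sigma>(z))\<close> by at most
  \<open>\<surd>(h(x) h(z))\<close>. With \<open>\<theta> = \<delta> powr (1/5)\<close>, the quasigeodesic never reaches height \<open>4\<theta>\<^sup>2\<close>. Otherwise it
  makes an excursion from height \<open>\<theta>\<^sup>2\<close> up to \<open>4\<theta>\<^sup>2\<close> and back. This excursion is long, since the
  geodesic joining its ends stays below height \<open>\<theta>\<^sup>2\<close> but passes close to its top by a Gromov product
  estimate; and it is short, since above height \<open>\<theta>\<^sup>2\<close> every unit step advances \<open>\<sigma>\<close> by definitely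
  less than its length, so the ends of a long excursion would be too close together. Below height
  \<open>4\<theta>\<^sup>2\<close> every point lies within \<open>3\<theta>\<close> of the axis; points projecting beyond an endpoint of the
  segment are caught by the quasigeodesic inequality at a time where the projection crosses it.\<close>

section \<open>The hyperboloid model\<close>

lemma mink_commute: "mink x y = mink y x"
  by (simp add: mink_def inner_commute mult.commute)

lemma mink_add_left: "mink (x + y) z = mink x z + mink y z"
  by (simp add: mink_def inner_add_left algebra_simps)

lemma mink_add_right: "mink z (x + y) = mink z x + mink z y"
  by (simp add: mink_def inner_add_right algebra_simps)

lemma mink_diff_left: "mink (x - y) z = mink x z - mink y z"
  by (simp add: mink_def inner_diff_left algebra_simps)

lemma mink_diff_right: "mink z (x - y) = mink z x - mink z y"
  by (simp add: mink_def inner_diff_right algebra_simps)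

lemma mink_scaleR_left: "mink (a *\<^sub>R x) z = a * mink x z"
  by (simp add: mink_def algebra_simps)

lemma mink_scaleR_right: "mink z (a *\<^sub>R x) = a * mink z x"
  by (simp add: mink_def algebra_simps)

lemmas mink_bilinear = mink_add_left mink_add_right mink_diff_left mink_diff_right
  mink_scaleR_left mink_scaleR_right

lemma mink_self_H3: "x \<in> H3 \<Longrightarrow> mink x x = 1"
  by (simp add: H3_def)

lemma H3_fst_sq: "x \<in> H3 \<Longrightarrow> (fst x)^2 = 1 + snd x \<bullet> snd x"
  by (auto simp: H3_def mink_def power2_eq_square)

lemma H3_fst_gt_norm: "x \<in> H3 \<Longrightarrow> norm (snd x) < fst x"
  by (rule power_less_imp_less_base[of _ 2]) (auto simp: H3_fst_sq H3_def dot_square_norm)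

text \<open>Reverse Cauchy--Schwarz for a timelike unit vector \<open>e\<close>; in particular the form is
  negative semidefinite on \<open>e\<^sup>\<bottom>\<close>.\<close>
lemma mink_self_le_sq:
  assumes "e \<in> H3"
  shows "mink v v \<le> (mink v e)^2"
proof -
  obtain a u where e: "e = (a, u)" by fastforce
  obtain b z where v: "v = (b, z)" by fastforce
  define U where "U = u \<bullet> u"
  define Z where "Z = z \<bullet> z"
  define c where "c = u \<bullet> z"
  have a2: "a^2 = 1 + U" using H3_fst_sq[OF assms] e by (simp add: U_def)
  have U0: "U \<ge> 0" "Z \<ge> 0" by (auto simp: U_def Z_def)
  have cs: "c^2 \<le> U * Z" using Cauchy_Schwarz_ineq by (simp add: c_def U_def Z_def)
  have "b^2 - Z \<le> (a*b - c)^2"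
  proof (cases "U = 0")
    case True
    hence "c = 0" "a^2 = 1" using cs a2 by simp_all
    thus ?thesis using U0 by (simp add: power_mult_distrib)
  next
    case False
    have "U * ((a*b - c)^2 - (b^2 - Z)) - (U*b - a*c)^2 = U*Z - c^2"
      using a2 by algebra
    hence "0 \<le> U * ((a*b - c)^2 - (b^2 - Z))" using cs zero_le_power2[of "U*b - a*c"] by linarith
    thus ?thesis using False U0 by (simp add: zero_le_mult_iff)
  qed
  moreover have "mink v v = b^2 - Z" "mink v e = a*b - c"
    using e v by (simp_all add: mink_def Z_def c_def inner_commute power2_eq_square mult.commute)
  ultimately show ?thesis by simp
qed

lemma mink_pos_H3:
  assumes "x \<in> H3" "y \<in> H3"
  shows "mink x y > 0"
proof -
  have "snd x \<bullet> snd y \<le> norm (snd x) * norm (snd y)" by (rule norm_cauchy_schwarz)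
  also have "\<dots> < fst x * fst y"
    using H3_fst_gt_norm[OF assms(1)] H3_fst_gt_norm[OF assms(2)]
    by (meson mult_strict_mono norm_ge_zero order.strict_trans1)
  finally show ?thesis by (simp add: mink_def)
qed

lemma mink_ge_1_H3:
  assumes "x \<in> H3" "y \<in> H3"
  shows "mink x y \<ge> 1"
proof -
  have "1 \<le> (mink x y)^2" using mink_self_le_sq[OF assms(2), of x] mink_self_H3[OF assms(1)] by simp
  moreover have "0 \<le> mink x y" using mink_pos_H3[OF assms] by simp
  ultimately show ?thesis using power2_le_imp_le[of 1 "mink x y"] by simp
qed

lemma cosh_hdist: "x \<in> H3 \<Longrightarrow> y \<in> H3 \<Longrightarrow> cosh (hdist x y) = mink x y"
  by (simp add: hdist_def mink_ge_1_H3)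

lemma hdist_nonneg: "x \<in> H3 \<Longrightarrow> y \<in> H3 \<Longrightarrow> hdist x y \<ge> 0"
  by (simp add: hdist_def mink_ge_1_H3)

lemma hdist_self: "x \<in> H3 \<Longrightarrow> hdist x x = 0"
  by (simp add: hdist_def H3_def)

lemma H3_eq_if_mink_eq_1:
  assumes x: "x \<in> H3" and y: "y \<in> H3" and "mink x y = 1"
  shows "x = y"
proof -
  define v where "v = y - x"
  have vx: "mink v x = 0" and vv: "mink v v = 0"
    using assms by (simp_all add: v_def mink_bilinear mink_commute H3_def)
  obtain a u where xe: "x = (a, u)" by fastforce
  obtain b z where ve: "v = (b, z)" by fastforce
  have a2: "a^2 = 1 + u \<bullet> u" using H3_fst_sq[OF x] xe by simp
  have ba: "b * a = z \<bullet> u" and bb: "b * b = z \<bullet> z" using vx vv xe ve by (simp_all add: mink_def)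
  have "(b * a)^2 \<le> (u \<bullet> u) * (z \<bullet> z)" using Cauchy_Schwarz_ineq[of u z] ba by (simp add: inner_commute)
  moreover have "(a^2 - 1) * b^2 = (u \<bullet> u) * (z \<bullet> z)" using a2 bb by (simp add: power2_eq_square)
  ultimately have "b^2 * a^2 \<le> (a^2 - 1) * b^2" by (simp add: power_mult_distrib)
  hence "b = 0" by (simp add: algebra_simps)
  hence "v = 0" using bb ve by (simp add: zero_prod_def)
  thus ?thesis by (simp add: v_def)
qed

lemma hdist_pos:
  assumes "u \<in> H3" "v \<in> H3" "u \<noteq> v"
  shows "hdist u v > 0"
  using mink_ge_1_H3[OF assms(1,2)] H3_eq_if_mink_eq_1[OF assms(1,2)] assms(3)
  by (fastforce simp: hdist_def)

lemma mink_perp_Cauchy_Schwarz: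
  assumes e: "e \<in> H3" and y: "mink y e = 0" and z: "mink z e = 0"
  shows "(mink y z)^2 \<le> mink y y * mink z z"
proof -
  have neg: "mink w w \<le> 0" if "mink w e = 0" for w
    using mink_self_le_sq[OF e, of w] that by simp
  define A where "A = mink z z"
  define B where "B = mink y z"
  define C where "C = mink y y"
  have quad: "C + 2 * l * B + l^2 * A \<le> 0" for l
  proof -
    have "mink (y + l *\<^sub>R z) (y + l *\<^sub>R z) \<le> 0" using y z by (intro neg) (simp add: mink_bilinear)
    thus ?thesis
      by (simp add: A_def B_def C_def mink_bilinear mink_commute[of z y] power2_eq_square algebra_simps)
  qed
  show ?thesis
  proof (cases "A = 0")
    case True
    have "B = 0"
    proof (rule ccontr)
      assume "B \<noteq> 0"
      thus False using quad[of "(1 - C) / (2*B)"] True by (simp add: field_simps)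
    qed
    thus ?thesis using True by (simp add: A_def B_def C_def)
  next
    case False
    hence A: "A < 0" using neg[OF z] by (simp add: A_def)
    have "C + 2 * (- B / A) * B + (- B / A)^2 * A \<le> 0" by (rule quad)
    hence "C \<le> B^2 / A" using A by (simp add: power2_eq_square field_simps)
    hence "B^2 \<le> C * A" using A by (simp add: neg_le_divide_eq)
    thus ?thesis by (simp add: A_def B_def C_def mult.commute)
  qed
qed

lemma cosh_le_exp_abs: "cosh (x::real) \<le> exp \<bar>x\<bar>"
  using cosh_plus_sinh[of "\<bar>x\<bar>"] by simp

lemma two_sinh_mult_le_sinh_add:
  fixes U V :: real
  assumes "U \<ge> 0" "V \<ge> 0"
  shows "2 * sinh U * sinh V \<le> sinh (U + V)"
proof -
  have "sinh U * sinh V \<le> sinh U * cosh V"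
    using assms sinh_le_cosh_real[of V] by (intro mult_left_mono) auto
  moreover have "sinh U * sinh V \<le> cosh U * sinh V"
    using assms sinh_le_cosh_real[of U] by (intro mult_right_mono) auto
  ultimately show ?thesis by (simp add: sinh_add)
qed

text \<open>The left side is \<open>cosh d(x, c)\<close> for the point \<open>c\<close> at distance \<open>\<tau>\<close> from \<open>u\<close> on a segment
  \<open>[u, v]\<close> of length \<open>L\<close>, when \<open>d(x, u) = \<tau> + e\<close> and \<open>d(x, v) = L - \<tau> + e\<close>.\<close>
lemma cosh_shifted_sinh_average_le:
  fixes L \<tau> e :: real
  assumes "0 \<le> \<tau>" "\<tau> \<le> L" "0 < L"
  shows "(cosh (\<tau> + e) * sinh (L - \<tau>) + cosh (L - \<tau> + e) * sinh \<tau>) / sinh L \<le> exp \<bar>e\<bar>"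
proof -
  define S where "S = 2 * sinh \<tau> * sinh (L - \<tau>)"
  have S: "0 \<le> S" "S \<le> sinh L"
    using assms two_sinh_mult_le_sinh_add[of \<tau> "L - \<tau>"] by (auto simp: S_def)
  have key: "cosh (\<tau> + e) * sinh V + cosh (V + e) * sinh \<tau>
      = cosh e * sinh (\<tau> + V) + 2 * sinh e * sinh \<tau> * sinh V" for V
    by (simp add: cosh_add sinh_add algebra_simps)
  have "cosh (\<tau> + e) * sinh (L - \<tau>) + cosh (L - \<tau> + e) * sinh \<tau> = cosh e * sinh L + sinh e * S"
    using key[of "L - \<tau>"] by (simp add: S_def mult_ac)
  also have "\<dots> \<le> cosh e * sinh L + \<bar>sinh e\<bar> * sinh L"
    using mult_mono[OF abs_ge_self S(2) abs_ge_zero S(1)] by simp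
  finally have "(cosh (\<tau> + e) * sinh (L - \<tau>) + cosh (L - \<tau> + e) * sinh \<tau>) / sinh L
      \<le> cosh e + \<bar>sinh e\<bar>"
    using assms by (simp add: divide_le_eq algebra_simps)
  also have "cosh e + \<bar>sinh e\<bar> = exp \<bar>e\<bar>"
    using cosh_plus_sinh[of "\<bar>e\<bar>"] by simp
  finally show ?thesis .
qed

lemma sinh_weights_le:
  fixes L t :: real
  assumes "0 < L" "0 \<le> t" "t \<le> 1"
  shows "sinh ((1 - t) * L) + sinh (t * L) \<le> sinh L"
proof -
  have s: "sinh ((1 - t) * L) \<ge> 0" "sinh (t * L) \<ge> 0" using assms by auto
  have "sinh L = sinh ((1 - t) * L + t * L)" by (simp add: algebra_simps)
  also have "\<dots> = sinh ((1 - t) * L) * cosh (t * L) + cosh ((1 - t) * L) * sinh (t * L)"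
    by (rule sinh_add)
  finally have "sinh L = sinh ((1 - t) * L) * cosh (t * L) + cosh ((1 - t) * L) * sinh (t * L)" .
  moreover have "sinh ((1 - t) * L) \<le> sinh ((1 - t) * L) * cosh (t * L)"
    using mult_left_mono[OF cosh_real_ge_1 s(1)] by simp
  moreover have "sinh (t * L) \<le> cosh ((1 - t) * L) * sinh (t * L)"
    using mult_right_mono[OF cosh_real_ge_1 s(2)] by simp
  ultimately show ?thesis by linarith
qed

lemma sinh_weights_identity:
  fixes L s :: real
  shows "(sinh (L - s))^2 + 2 * sinh (L - s) * sinh s * cosh L + (sinh s)^2 = (sinh L)^2"
proof -
  have "(cosh L)^2 = (sinh L)^2 + 1" "(cosh s)^2 = (sinh s)^2 + 1" by (simp_all add: cosh_square_eq)
  thus ?thesis unfolding sinh_diff by algebra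
qed

lemma cosh_ge_1_plus_sq_half: "1 + u^2 / 2 \<le> cosh (u::real)" if "0 \<le> u"
proof -
  have c: "cosh u = 1 + 2 * (sinh (u/2))^2"
    using cosh_add[of "u/2" "u/2"] cosh_square_eq[of "u/2"] by (simp add: power2_eq_square)
  have "u/2 \<le> sinh (u/2)" using real_le_x_sinh[of "u/2"] that by (simp add: sinh_field_def exp_minus)
  hence "(u/2)^2 \<le> (sinh (u/2))^2" using that by (intro power_mono) auto
  thus ?thesis using c by (simp add: power_divide)
qed

lemma cosh_diff_le: "cosh u - cosh v \<le> (u - v) * exp u / 2" if "v \<le> (u::real)"
proof -
  have "exp (- u) \<le> exp (- v)" using that by simp
  hence "cosh u - cosh v \<le> (exp u - exp v) / 2" by (simp add: cosh_field_def field_simps)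
  moreover have "exp u * (1 + (v - u)) \<le> exp u * exp (v - u)"
    using exp_ge_add_one_self[of "v - u"] by (intro mult_left_mono) auto
  hence "exp u - exp v \<le> (u - v) * exp u" by (simp add: exp_diff algebra_simps)
  hence "(exp u - exp v) / 2 \<le> (u - v) * exp u / 2" by simp
  ultimately show ?thesis by linarith
qed

lemma exp_3_le_27: "exp (3::real) \<le> 27"
proof -
  have "exp (3::real) = exp 1 * exp 1 * exp 1" by (simp flip: exp_add)
  also have "\<dots> \<le> 3 * 3 * 3" using exp_le by (intro mult_mono) auto
  finally show ?thesis by simp
qed

lemma le_sub_of_cosh_stretch:
  fixes \<theta> u v :: real
  assumes th: "0 < \<theta>" "\<theta> \<le> 1/2" and u: "1/2 \<le> u" "u \<le> 3" and v: "0 \<le> v"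
    and h: "(1 + \<theta>^2) * (cosh v - 1) + 1 \<le> cosh u"
  shows "v \<le> u - \<theta>^2 / 200"
proof -
  have "1/2 * (1/2) \<le> u * u" using u by (intro mult_mono) auto
  hence "1/4 \<le> u^2" by (simp add: power2_eq_square)
  hence cu: "1/8 \<le> cosh u - 1" using cosh_ge_1_plus_sq_half[of u] u by simp
  have "\<theta> * \<theta> \<le> 1/2 * (1/2)" using th by (intro mult_mono) auto
  hence t2: "0 < \<theta>^2" "\<theta>^2 \<le> 1/4" using th by (simp_all add: power2_eq_square)
  have gap: "\<theta>^2 / 8 \<le> (1 + \<theta>^2) * (cosh u - cosh v)"
  proof -
    have "\<theta>^2 * (1/8) \<le> \<theta>^2 * (cosh u - 1)" using cu t2 by (intro mult_left_mono) auto
    thus ?thesis using h by (simp add: algebra_simps)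
  qed
  hence "0 < (1 + \<theta>^2) * (cosh u - cosh v)" using t2 by linarith
  hence "cosh v < cosh u" using t2 by (simp add: zero_less_mult_iff)
  hence vu: "v < u" using u v by (simp add: cosh_real_nonneg_less_iff)
  have "(1 + \<theta>^2) * (cosh u - cosh v) \<le> 5/4 * (cosh u - cosh v)"
    using t2 \<open>cosh v < cosh u\<close> by (intro mult_right_mono) auto
  hence "\<theta>^2 / 8 \<le> 5/4 * (cosh u - cosh v)" by (rule order_trans[OF gap])
  hence "\<theta>^2 / 10 \<le> cosh u - cosh v" by (simp add: field_simps)
  also have "\<dots> \<le> (u - v) * exp u / 2" using cosh_diff_le vu by simp
  also have "\<dots> \<le> (u - v) * 27 / 2"
    using vu u exp_3_le_27 order.trans[of "exp u" "exp 3" 27] by (intro divide_right_mono mult_left_mono) auto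
  finally have "\<theta>^2 / 135 \<le> u - v" by simp
  thus ?thesis using t2 by linarith
qed

lemma sqrt_prod_mult_sub_ge:
  fixes W W' c \<theta> :: real
  assumes "\<theta>^2 \<le> W" "\<theta>^2 \<le> W'" "1 \<le> c"
  shows "(1 + \<theta>^2) * (c - 1) + 1 \<le> sqrt ((1 + W) * (1 + W')) * c - sqrt (W * W')"
proof -
  have W: "W \<ge> 0" "W' \<ge> 0" using assms(1,2) zero_le_power2[of \<theta>] by linarith+
  have "(1 + \<theta>^2)^2 \<le> (1 + W) * (1 + W')"
    using assms W by (simp add: power2_eq_square mult_mono)
  hence S1: "1 + \<theta>^2 \<le> sqrt ((1 + W) * (1 + W'))" by (simp add: real_le_rsqrt)
  have "2 * sqrt (W * W') \<le> W + W'"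
    using W arith_geo_mean_sqrt[of W W'] by simp
  hence "(1 + sqrt (W * W'))^2 \<le> (1 + W) * (1 + W')"
    using W by (simp add: power2_eq_square algebra_simps)
  hence S2: "1 + sqrt (W * W') \<le> sqrt ((1 + W) * (1 + W'))" by (simp add: real_le_rsqrt)
  have "(1 + \<theta>^2) * (c - 1) \<le> sqrt ((1 + W) * (1 + W')) * (c - 1)"
    using S1 assms(3) by (intro mult_right_mono) auto
  thus ?thesis using S2 by (simp add: algebra_simps)
qed

lemma sqrt_prod_sub_ge:
  fixes \<theta> B :: real
  assumes th: "0 < \<theta>" "\<theta> \<le> 1/2" and B: "0 \<le> B" "B \<le> \<theta>"
  shows "1 + \<theta>^2/12 \<le> sqrt ((1 + 4*\<theta>^2) * (1 + B^2)) - 2*\<theta>*B"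
proof -
  define K where "K = 1 + 2*\<theta>*B"
  have "\<theta> * B \<le> \<theta> * \<theta>" "\<theta> * \<theta> \<le> \<theta> * (1/2)" using th B by (intro mult_left_mono; simp)+
  hence K: "K \<le> 3/2" "\<theta>^2 \<le> 1/4" using th unfolding K_def power2_eq_square by linarith+
  have "\<theta>^2 \<le> (2*\<theta> - B)^2" using th B by (intro power_mono) auto
  moreover have "K * \<theta>^2 \<le> 3/2 * \<theta>^2" "\<theta>^2 * \<theta>^2 \<le> \<theta>^2 * (1/4)"
    using K by (intro mult_right_mono mult_left_mono; simp)+
  hence "K * \<theta>^2 / 6 + \<theta>^2 * \<theta>^2 / 144 \<le> \<theta>^2" using zero_le_power2[of \<theta>] by linarith
  ultimately have "(K + \<theta>^2/12)^2 \<le> K^2 + (2*\<theta> - B)^2"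
    by (simp add: power2_eq_square algebra_simps)
  also have "K^2 + (2*\<theta> - B)^2 = (1 + 4*\<theta>^2) * (1 + B^2)"
    by (simp add: K_def power2_eq_square algebra_simps)
  finally have "K + \<theta>^2/12 \<le> sqrt ((1 + 4*\<theta>^2) * (1 + B^2))" by (simp add: real_le_rsqrt)
  thus ?thesis by (simp add: K_def)
qed

lemma half_le_ln_one_plus: "x / 2 \<le> ln (1 + x)" if "0 \<le> x" "x \<le> (1/2::real)"
proof -
  have "x * x \<le> x * (1/2)" using that by (intro mult_left_mono) auto
  thus ?thesis using ln_one_plus_pos_lower_bound[of x] that by (simp add: power2_eq_square)
qed

lemma exists_equal_subdivision:
  fixes T :: real
  assumes "1 \<le> T"
  obtains k :: nat and \<sigma> where "T / 2 \<le> real k" "1 \<le> \<sigma>" "\<sigma> \<le> 2" "real k * \<sigma> = T"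
proof
  define k where "k = nat \<lfloor>T\<rfloor>"
  have k: "1 \<le> real k" "real k \<le> T" "T - 1 < real k" using assms by (auto simp: k_def)
  show "T / 2 \<le> real k" using k by linarith
  show "1 \<le> T / real k" "T / real k \<le> 2" "real k * (T / real k) = T"
    using k \<open>T / 2 \<le> real k\<close> by (auto simp: field_simps)
qed

lemma abs_telescope_le:
  fixes s :: "nat \<Rightarrow> real"
  assumes "\<And>i. i < k \<Longrightarrow> \<bar>s (Suc i) - s i\<bar> \<le> C"
  shows "\<bar>s k - s 0\<bar> \<le> real k * C"
proof -
  have "\<bar>s k - s 0\<bar> = \<bar>\<Sum>i<k. s (Suc i) - s i\<bar>" by (simp add: sum_lessThan_telescope)
  also have "\<dots> \<le> (\<Sum>i<k. \<bar>s (Suc i) - s i\<bar>)" by (rule sum_abs)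
  also have "\<dots> \<le> (\<Sum>i<k. C)" using assms by (intro sum_mono) auto
  finally show ?thesis by simp
qed

lemma last_crossing:
  fixes w :: "real \<Rightarrow> real"
  assumes w: "continuous_on {x..y} w" and "x \<le> y" "w x \<le> c" "c \<le> w y"
  obtains a where "x \<le> a" "a \<le> y" "w a = c" "\<And>s. a \<le> s \<Longrightarrow> s \<le> y \<Longrightarrow> c \<le> w s"
proof -
  define A where "A = {s \<in> {x..y}. w s \<le> c}"
  have "closed A" unfolding A_def by (intro continuous_on_closed_Collect_le w continuous_on_const) auto
  moreover have "x \<in> A" "bdd_above A" using assms by (auto simp: A_def bdd_above_def)
  ultimately have aA: "Sup A \<in> A" using closed_contains_Sup by blast
  have above: "s \<le> Sup A" if "s \<in> A" for s using cSup_upper[OF that \<open>bdd_above A\<close>] .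
  obtain s0 where s0: "Sup A \<le> s0" "s0 \<le> y" "w s0 = c"
    using IVT'[of w "Sup A" c y] aA assms continuous_on_subset[OF w, of "{Sup A..y}"] by (auto simp: A_def)
  hence "s0 = Sup A" using above[of s0] aA by (auto simp: A_def)
  have "c \<le> w s" if "Sup A \<le> s" "s \<le> y" for s
  proof (rule ccontr)
    assume "\<not> c \<le> w s"
    hence "s = Sup A" using above[of s] aA that by (force simp: A_def)
    thus False using \<open>\<not> c \<le> w s\<close> s0 \<open>s0 = Sup A\<close> by simp
  qed
  thus ?thesis using that[of "Sup A"] aA s0 \<open>s0 = Sup A\<close> by (auto simp: A_def)
qed

lemma first_crossing:
  fixes w :: "real \<Rightarrow> real"
  assumes w: "continuous_on {x..y} w" and "x \<le> y" "c \<le> w x" "w y \<le> c"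
  obtains b where "x \<le> b" "b \<le> y" "w b = c" "\<And>s. x \<le> s \<Longrightarrow> s \<le> b \<Longrightarrow> c \<le> w s"
proof -
  have "continuous_on {-y..-x} (w \<circ> uminus)"
    by (intro continuous_on_compose continuous_intros continuous_on_subset[OF w]) auto
  then obtain a where "-y \<le> a" "a \<le> -x" "w (-a) = c" "\<And>s. a \<le> s \<Longrightarrow> s \<le> -x \<Longrightarrow> c \<le> w (-s)"
    using last_crossing[of "-y" "-x" "w \<circ> uminus" c] assms by auto
  thus ?thesis using that[of "-a"] by (metis minus_le_iff minus_minus neg_le_iff_le)
qed

lemma small_power_5_le:
  fixes \<theta> :: real
  assumes "0 < \<theta>" "\<theta> \<le> 1/100000"
  shows "\<theta>^5 \<le> \<theta>^3" "\<theta>^3 \<le> \<theta>^2 / 100000"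
proof -
  have "\<theta>^3 * \<theta>^2 \<le> \<theta>^3 * 1" using assms by (intro mult_left_mono power_le_one) auto
  thus "\<theta>^5 \<le> \<theta>^3" by (simp flip: power_add)
  have "\<theta>^2 * \<theta> \<le> \<theta>^2 * (1/100000)" using assms by (intro mult_left_mono) auto
  thus "\<theta>^3 \<le> \<theta>^2 / 100000" by (simp add: power2_eq_square power3_eq_cube)
qed

lemma small_power_5_excursion_lt:
  fixes \<theta> T :: real
  assumes th: "0 < \<theta>" "\<theta> \<le> 1/100000" and T: "0 \<le> T" "T * \<theta>^2 \<le> 2400"
  shows "\<theta>^5 * T + 3/2 * \<theta>^5 < \<theta>^2/24"
proof -
  have "\<theta>^5 * T = \<theta>^3 * (T * \<theta>^2)" by (simp flip: power_add add: mult_ac)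
  also have "\<dots> \<le> \<theta>^3 * 2400" using th T by (intro mult_left_mono) auto
  finally show ?thesis using small_power_5_le[OF th] th zero_less_power[of \<theta> 2] by linarith
qed

lemma small_power_5_tracking_lt:
  fixes \<theta> \<delta> :: real
  assumes th: "0 < \<theta>" "\<theta> \<le> 1/100000" and dl: "\<delta> = \<theta>^5"
  shows "(1 + \<delta>)^2 * (3*\<theta> + \<delta>) + \<delta> < 5*\<theta>"
proof -
  have "\<theta>^2 \<le> \<theta>" using th by (simp add: power2_eq_square mult_left_le)
  hence d: "0 \<le> \<delta>" "\<delta> \<le> \<theta>/100"
    using small_power_5_le[OF th] zero_less_power[OF th(1), of 5] th unfolding dl by linarith+
  have "(1 + \<delta>)^2 \<le> (1 + 1/100)^2" using d th by (intro power_mono) auto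
  hence "(1 + \<delta>)^2 * (3*\<theta> + \<delta>) \<le> (1 + 1/100)^2 * (3*\<theta> + \<theta>/100)"
    using d by (intro mult_mono) auto
  thus ?thesis using d th by (simp add: power2_eq_square)
qed

section \<open>Geodesic segments\<close>

definition geod_point :: "pt4 \<Rightarrow> pt4 \<Rightarrow> real \<Rightarrow> pt4" where
  "geod_point u v t = (let L = hdist u v in
     (sinh ((1 - t) * L) / sinh L) *\<^sub>R u + (sinh (t * L) / sinh L) *\<^sub>R v)"

lemma geodesic_segment_eq_image: "u \<noteq> v \<Longrightarrow> geodesic_segment u v = geod_point u v ` {0..1}"
  by (simp add: geodesic_segment_def geod_point_def Let_def)

lemma geod_point_0: "geod_point u v 0 = u" if "u \<in> H3" "v \<in> H3" "u \<noteq> v"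
  using hdist_pos[OF that] by (simp add: geod_point_def Let_def)

lemma geod_point_1: "geod_point u v 1 = v" if "u \<in> H3" "v \<in> H3" "u \<noteq> v"
  using hdist_pos[OF that] by (simp add: geod_point_def Let_def)

lemma mink_geod_point:
  "mink x (geod_point u v t)
     = (mink x u * sinh ((1 - t) * hdist u v) + mink x v * sinh (t * hdist u v)) / sinh (hdist u v)"
  by (simp add: geod_point_def Let_def mink_bilinear add_divide_distrib algebra_simps)

lemma geod_point_convex:
  assumes "u \<in> H3" "v \<in> H3" "u \<noteq> v" "0 \<le> t" "t \<le> 1"
  obtains \<alpha> \<beta> where "geod_point u v t = \<alpha> *\<^sub>R u + \<beta> *\<^sub>R v" "0 \<le> \<alpha>" "0 \<le> \<beta>" "\<alpha> + \<beta> \<le> 1"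
proof
  define L where "L = hdist u v"
  have L: "0 < L" using hdist_pos[OF assms(1-3)] by (simp add: L_def)
  show "geod_point u v t = (sinh ((1 - t) * L) / sinh L) *\<^sub>R u + (sinh (t * L) / sinh L) *\<^sub>R v"
    by (simp add: geod_point_def L_def Let_def)
  show "0 \<le> sinh ((1 - t) * L) / sinh L" "0 \<le> sinh (t * L) / sinh L"
    using assms L by simp_all
  show "sinh ((1 - t) * L) / sinh L + sinh (t * L) / sinh L \<le> 1"
    using sinh_weights_le[OF L assms(4,5)] L by (simp add: add_divide_distrib[symmetric])
qed

lemma geod_point_H3:
  assumes u: "u \<in> H3" and v: "v \<in> H3" and "u \<noteq> v" "0 \<le> t" "t \<le> 1"
  shows "geod_point u v t \<in> H3"
proof -
  define L where "L = hdist u v"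
  define s where "s = t * L"
  define \<alpha> where "\<alpha> = sinh (L - s) / sinh L"
  define \<beta> where "\<beta> = sinh s / sinh L"
  have L: "0 < L" using hdist_pos[OF assms(1-3)] by (simp add: L_def)
  have g: "geod_point u v t = \<alpha> *\<^sub>R u + \<beta> *\<^sub>R v"
    by (simp add: geod_point_def Let_def \<alpha>_def \<beta>_def L_def s_def algebra_simps)
  have "mink u v = cosh L" using cosh_hdist[OF u v] by (simp add: L_def)
  hence "mink (geod_point u v t) (geod_point u v t) = \<alpha>^2 + 2 * \<alpha> * \<beta> * cosh L + \<beta>^2"
    unfolding g using u v by (simp add: mink_bilinear mink_commute[of v u] H3_def power2_eq_square algebra_simps)
  also have "\<dots> = ((sinh (L - s))^2 + 2 * sinh (L - s) * sinh s * cosh L + (sinh s)^2) / (sinh L)^2"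
    using L by (simp add: \<alpha>_def \<beta>_def power_divide add_divide_distrib power2_eq_square)
  also have "\<dots> = 1" using sinh_weights_identity[of L s] L by simp
  finally have mink1: "mink (geod_point u v t) (geod_point u v t) = 1" .
  have "fst (geod_point u v t) \<noteq> 0"
  proof
    assume "fst (geod_point u v t) = 0"
    thus False using mink1 inner_ge_zero[of "snd (geod_point u v t)"] by (simp add: mink_def)
  qed
  moreover have "fst (geod_point u v t) \<ge> 0"
  proof -
    from geod_point_convex[OF assms] obtain a b
      where g': "geod_point u v t = a *\<^sub>R u + b *\<^sub>R v" and ab: "0 \<le> a" "0 \<le> b" by blast
    have "0 \<le> fst u" "0 \<le> fst v" using u v by (simp_all add: H3_def)
    thus ?thesis using g' ab by simp
  qed
  ultimately show ?thesis using mink1 by (simp add: H3_def)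
qed

lemma exists_segment_point_mink_le:
  assumes x: "x \<in> H3" and u: "u \<in> H3" and v: "v \<in> H3"
  obtains c \<alpha> \<beta> where "c \<in> H3" "c = \<alpha> *\<^sub>R u + \<beta> *\<^sub>R v" "0 \<le> \<alpha>" "0 \<le> \<beta>" "\<alpha> + \<beta> \<le> 1"
    "mink x c \<le> exp (\<bar>hdist x u + hdist x v - hdist u v\<bar> / 2)"
proof (cases "u = v")
  case True
  have "mink x u \<le> exp \<bar>hdist x u\<bar>" using cosh_hdist[OF x u] cosh_le_exp_abs[of "hdist x u"] by simp
  moreover have "\<bar>hdist x u + hdist x v - hdist u v\<bar> / 2 = \<bar>hdist x u\<bar>"
    using True hdist_self[OF u] by simp
  ultimately show ?thesis using that[OF u, of 1 0] by simp
next
  case False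
  define L where "L = hdist u v"
  define a where "a = hdist x u"
  define b where "b = hdist x v"
  define E where "E = a + b - L"
  have L: "L > 0" using hdist_pos[OF u v False] by (simp add: L_def)
  have ab: "a \<ge> 0" "b \<ge> 0" using hdist_nonneg x u v by (auto simp: a_def b_def)
  have ma: "mink x u = cosh a" and mb: "mink x v = cosh b"
    using cosh_hdist x u v by (auto simp: a_def b_def)
  obtain t where t: "0 \<le> t" "t \<le> 1" and bound: "mink x (geod_point u v t) \<le> exp (\<bar>E\<bar> / 2)"
  proof (cases "\<bar>a - b\<bar> \<le> L")
    case True
    define \<tau> where "\<tau> = (L + a - b) / 2"
    have \<tau>: "0 \<le> \<tau>" "\<tau> \<le> L" using True by (auto simp: \<tau>_def)
    have "\<tau> / L * L = \<tau>" "(1 - \<tau> / L) * L = L - \<tau>" using L by (auto simp: field_simps)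
    moreover have "a = \<tau> + E / 2" "b = (L - \<tau>) + E / 2" by (auto simp: \<tau>_def E_def field_simps)
    ultimately have "mink x (geod_point u v (\<tau> / L))
        = (cosh (\<tau> + E/2) * sinh (L - \<tau>) + cosh (L - \<tau> + E/2) * sinh \<tau>) / sinh L"
      by (simp add: mink_geod_point ma mb flip: L_def)
    also have "\<dots> \<le> exp (\<bar>E\<bar> / 2)"
      using cosh_shifted_sinh_average_le[OF \<tau> L, of "E/2"] by simp
    finally show ?thesis using that[of "\<tau> / L"] \<tau> L by simp
  next
    case False
    hence "b \<le> \<bar>E\<bar> / 2 \<or> a \<le> \<bar>E\<bar> / 2" using ab by (auto simp: E_def)
    moreover have "cosh a \<le> exp a" "cosh b \<le> exp b"
      using cosh_le_exp_abs[of a] cosh_le_exp_abs[of b] ab by simp_all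
    moreover have "mink x (geod_point u v 0) = cosh a" "mink x (geod_point u v 1) = cosh b"
      using ma mb geod_point_0[OF u v \<open>u \<noteq> v\<close>] geod_point_1[OF u v \<open>u \<noteq> v\<close>] by simp_all
    ultimately have "mink x (geod_point u v 1) \<le> exp (\<bar>E\<bar> / 2) \<or> mink x (geod_point u v 0) \<le> exp (\<bar>E\<bar> / 2)"
      using exp_le_cancel_iff[of b "\<bar>E\<bar> / 2"] exp_le_cancel_iff[of a "\<bar>E\<bar> / 2"] by linarith
    thus ?thesis using that[of 0] that[of 1] by auto
  qed
  obtain \<alpha> \<beta> where "geod_point u v t = \<alpha> *\<^sub>R u + \<beta> *\<^sub>R v" "0 \<le> \<alpha>" "0 \<le> \<beta>" "\<alpha> + \<beta> \<le> 1"
    using geod_point_convex[OF u v False t] .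
  with that geod_point_H3[OF u v False t] bound show ?thesis
    by (simp add: E_def a_def b_def L_def)
qed

section \<open>Quasigeodesics\<close>

lemma quasigeodesic_H3: "quasigeodesic \<delta> n \<gamma> \<Longrightarrow> t \<in> {0..n} \<Longrightarrow> \<gamma> t \<in> H3"
  by (auto simp: quasigeodesic_def)

lemma quasigeodesic_hdist_ge: "quasigeodesic \<delta> n \<gamma> \<Longrightarrow> s \<in> {0..n} \<Longrightarrow> t \<in> {0..n} \<Longrightarrow>
    \<bar>s - t\<bar> / (1 + \<delta>) - \<delta> \<le> hdist (\<gamma> s) (\<gamma> t)"
  by (auto simp: quasigeodesic_def)

lemma quasigeodesic_hdist_le: "quasigeodesic \<delta> n \<gamma> \<Longrightarrow> s \<in> {0..n} \<Longrightarrow> t \<in> {0..n} \<Longrightarrow>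
    hdist (\<gamma> s) (\<gamma> t) \<le> (1 + \<delta>) * \<bar>s - t\<bar> + \<delta>"
  by (auto simp: quasigeodesic_def)

lemma mult_one_minus_le_divide_one_plus: "0 \<le> T \<Longrightarrow> 0 \<le> \<delta> \<Longrightarrow> T * (1 - \<delta>) \<le> T / (1 + \<delta>)"
  for T \<delta> :: real
  by (simp add: field_simps mult_nonneg_nonneg)

lemma quasigeodesic_gromov_defect:
  assumes q: "quasigeodesic \<delta> n \<gamma>" and "0 \<le> \<delta>" and ts: "0 \<le> a" "a \<le> t" "t \<le> b" "b \<le> n"
  shows "\<bar>hdist (\<gamma> t) (\<gamma> a) + hdist (\<gamma> t) (\<gamma> b) - hdist (\<gamma> a) (\<gamma> b)\<bar> \<le> 2*\<delta>*(b - a) + 3*\<delta>"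
proof -
  have i: "a \<in> {0..n}" "b \<in> {0..n}" "t \<in> {0..n}" using ts by auto
  have "(b - a) * (1 - \<delta>) \<le> (b - a) / (1 + \<delta>)"
    using ts assms(2) by (intro mult_one_minus_le_divide_one_plus) auto
  moreover have "(t - a) / (1 + \<delta>) + (b - t) / (1 + \<delta>) = (b - a) / (1 + \<delta>)"
    by (simp add: add_divide_distrib[symmetric])
  ultimately show ?thesis
    using quasigeodesic_hdist_le[OF q i(3,1)] quasigeodesic_hdist_le[OF q i(3,2)]
      quasigeodesic_hdist_le[OF q i(1,2)] quasigeodesic_hdist_ge[OF q i(3,1)]
      quasigeodesic_hdist_ge[OF q i(3,2)] quasigeodesic_hdist_ge[OF q i(1,2)] ts
    by (simp add: abs_le_iff algebra_simps)
qed

lemma quasigeodesic_hdist_lt_of_between: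
  assumes q: "quasigeodesic \<delta> n \<gamma>" and "0 \<le> \<delta>" and i: "s \<in> {0..n}" "t \<in> {0..n}" "u \<in> {0..n}"
    and "\<bar>t - s\<bar> \<le> \<bar>u - s\<bar>" and r: "hdist (\<gamma> u) (\<gamma> s) < r"
  shows "hdist (\<gamma> t) (\<gamma> s) < (1 + \<delta>)^2 * (r + \<delta>) + \<delta>"
proof -
  have "\<bar>u - s\<bar> / (1 + \<delta>) < r + \<delta>" using quasigeodesic_hdist_ge[OF q i(3,1)] r by simp
  hence "\<bar>u - s\<bar> < (1 + \<delta>) * (r + \<delta>)" using assms(2) by (simp add: divide_less_eq mult.commute)
  hence "(1 + \<delta>) * \<bar>t - s\<bar> < (1 + \<delta>) * ((1 + \<delta>) * (r + \<delta>))"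
    using assms(2,6) by (intro mult_strict_left_mono) auto
  thus ?thesis using quasigeodesic_hdist_le[OF q i(2,1)] by (simp add: power2_eq_square mult.assoc)
qed

section \<open>Coordinates adapted to a geodesic\<close>

lemma continuous_on_mink: "continuous_on S \<gamma> \<Longrightarrow> continuous_on S (\<lambda>t. mink (\<gamma> t) z)"
  unfolding mink_def by (intro continuous_intros) auto

locale hyperbolic_frame =
  fixes e0 e1 :: pt4
  assumes e0_H3: "e0 \<in> H3" and mink_e1_e1: "mink e1 e1 = -1" and mink_e0_e1: "mink e0 e1 = 0"
begin

definition coord0 :: "pt4 \<Rightarrow> real" where "coord0 x = mink x e0"
definition coord1 :: "pt4 \<Rightarrow> real" where "coord1 x = - mink x e1"
definition normal_part :: "pt4 \<Rightarrow> pt4" where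
  "normal_part x = x - coord0 x *\<^sub>R e0 - coord1 x *\<^sub>R e1"

text \<open>For \<open>x \<in> H3\<close>, \<open>height x = sinh\<^sup>2 d(x, axis)\<close>, and \<open>axis (axial_param x)\<close> is the nearest
  point projection of \<open>x\<close> onto the geodesic \<open>axis\<close>.\<close>
definition height :: "pt4 \<Rightarrow> real" where
  "height x = - mink (normal_part x) (normal_part x)"
definition axial_param :: "pt4 \<Rightarrow> real" where
  "axial_param x = (ln (coord0 x + coord1 x) - ln (coord0 x - coord1 x)) / 2"
definition axis :: "real \<Rightarrow> pt4" where
  "axis \<tau> = cosh \<tau> *\<^sub>R e0 + sinh \<tau> *\<^sub>R e1"

lemma mink_e0_e0: "mink e0 e0 = 1"
  using e0_H3 by (simp add: H3_def)

lemma mink_normal_part_e0: "mink (normal_part x) e0 = 0"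
  by (simp add: normal_part_def mink_bilinear mink_e0_e0 mink_commute[of e1 e0] mink_e0_e1 coord0_def)

lemma mink_normal_part_e1: "mink (normal_part x) e1 = 0"
  by (simp add: normal_part_def mink_bilinear mink_e1_e1 mink_e0_e1 coord1_def)

lemma normal_part_lincomb:
  "normal_part (a *\<^sub>R x + b *\<^sub>R z) = a *\<^sub>R normal_part x + b *\<^sub>R normal_part z"
  by (simp add: normal_part_def coord0_def coord1_def mink_bilinear algebra_simps)

lemma mink_eq_coords:
  "mink x z = coord0 x * coord0 z - coord1 x * coord1 z + mink (normal_part x) (normal_part z)"
proof -
  have "x = normal_part x + coord0 x *\<^sub>R e0 + coord1 x *\<^sub>R e1"
    "z = normal_part z + coord0 z *\<^sub>R e0 + coord1 z *\<^sub>R e1" by (simp_all add: normal_part_def)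
  hence "mink x z = mink (normal_part x + coord0 x *\<^sub>R e0 + coord1 x *\<^sub>R e1)
      (normal_part z + coord0 z *\<^sub>R e0 + coord1 z *\<^sub>R e1)" by simp
  thus ?thesis
    by (simp add: mink_bilinear mink_normal_part_e0 mink_normal_part_e1 mink_commute[of e0 "normal_part z"]
        mink_commute[of e1 "normal_part z"] mink_e0_e0 mink_e1_e1 mink_e0_e1 mink_commute[of e1 e0])
qed

lemma height_nonneg: "0 \<le> height x"
  using mink_self_le_sq[OF e0_H3, of "normal_part x"] by (simp add: height_def mink_normal_part_e0)

lemma abs_mink_normal_part_le: "\<bar>mink (normal_part x) (normal_part z)\<bar> \<le> sqrt (height x * height z)"
  using mink_perp_Cauchy_Schwarz[OF e0_H3 mink_normal_part_e0 mink_normal_part_e0, of x z]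
  by (simp add: height_def real_le_rsqrt)

lemma coord_sq_diff_H3: "x \<in> H3 \<Longrightarrow> (coord0 x)^2 - (coord1 x)^2 = 1 + height x"
  using mink_eq_coords[of x x] by (simp add: height_def H3_def power2_eq_square)

lemma coord0_pm_coord1_pos:
  assumes "x \<in> H3"
  shows "0 < coord0 x + coord1 x" "0 < coord0 x - coord1 x"
proof -
  have "(coord0 x + coord1 x) * (coord0 x - coord1 x) \<ge> 1"
    using coord_sq_diff_H3[OF assms] height_nonneg[of x] by (simp add: power2_eq_square algebra_simps)
  moreover have "coord0 x \<ge> 1" using mink_ge_1_H3[OF assms e0_H3] by (simp add: coord0_def)
  ultimately show "0 < coord0 x + coord1 x" "0 < coord0 x - coord1 x"
    by (auto simp: zero_less_mult_iff dest!: order.strict_trans2[OF zero_less_one])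
qed

lemma coord_polar:
  assumes "x \<in> H3"
  shows "coord0 x = sqrt (1 + height x) * cosh (axial_param x)"
    and "coord1 x = sqrt (1 + height x) * sinh (axial_param x)"
proof -
  define P where "P = coord0 x + coord1 x"
  define N where "N = coord0 x - coord1 x"
  have PN: "0 < P" "0 < N" using coord0_pm_coord1_pos[OF assms] by (simp_all add: P_def N_def)
  have Q: "sqrt (1 + height x) = sqrt P * sqrt N"
    using coord_sq_diff_H3[OF assms]
    by (simp add: P_def N_def real_sqrt_mult[symmetric] power2_eq_square algebra_simps)
  have "exp (axial_param x) = sqrt P / sqrt N"
    using PN by (simp add: axial_param_def exp_diff diff_divide_distrib P_def N_def flip: ln_sqrt)
  hence "sqrt (1 + height x) * exp (axial_param x) = P"
    and "sqrt (1 + height x) * exp (- axial_param x) = N"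
    using PN by (simp_all add: Q exp_minus)
  thus "coord0 x = sqrt (1 + height x) * cosh (axial_param x)"
    and "coord1 x = sqrt (1 + height x) * sinh (axial_param x)"
    by (simp_all add: cosh_field_def sinh_field_def field_simps P_def N_def)
qed

lemma mink_axis:
  assumes "x \<in> H3"
  shows "mink x (axis \<tau>) = sqrt (1 + height x) * cosh (axial_param x - \<tau>)"
proof -
  have "mink x (axis \<tau>) = coord0 x * cosh \<tau> - coord1 x * sinh \<tau>"
    by (simp add: axis_def mink_bilinear coord0_def coord1_def)
  thus ?thesis unfolding coord_polar[OF assms] cosh_diff by (simp add: algebra_simps)
qed

lemma mink_H3_approx:
  assumes "x \<in> H3" "z \<in> H3"
  shows "\<bar>mink x z - sqrt ((1 + height x) * (1 + height z)) * cosh (axial_param x - axial_param z)\<bar>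
    \<le> sqrt (height x * height z)"
proof -
  have "coord0 x * coord0 z - coord1 x * coord1 z
      = sqrt ((1 + height x) * (1 + height z)) * cosh (axial_param x - axial_param z)"
    unfolding coord_polar[OF assms(1)] coord_polar[OF assms(2)] real_sqrt_mult cosh_diff
    by (simp add: algebra_simps)
  thus ?thesis using mink_eq_coords[of x z] abs_mink_normal_part_le[of x z] by simp
qed

lemma hdist_axis_lt:
  assumes x: "x \<in> H3" and h: "height x < 4*\<theta>^2" and th: "0 < \<theta>" "\<theta> \<le> 1/2"
  shows "hdist x (axis (axial_param x)) < 3*\<theta>"
proof -
  define W where "W = height x"
  have W0: "W \<ge> 0" using height_nonneg by (simp add: W_def)
  have "hdist x (axis (axial_param x)) = ln (sqrt (1 + W) + sqrt W)"
    using mink_axis[OF x] W0 by (simp add: hdist_def arcosh_real_def W_def)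
  also have "\<dots> \<le> sqrt (1 + W) + sqrt W - 1"
    using W0 by (intro ln_le_minus_one add_pos_nonneg) simp_all
  also have "\<dots> < 3*\<theta>"
  proof -
    have "sqrt (1 + W) \<le> 1 + W/2"
      using W0 by (intro real_le_lsqrt) (simp_all add: power2_eq_square algebra_simps)
    moreover have "sqrt W < sqrt ((2*\<theta>)^2)"
      using h by (intro real_sqrt_less_mono) (simp add: W_def power_mult_distrib)
    moreover have "sqrt ((2*\<theta>)^2) = 2*\<theta>" using th by (simp only: real_sqrt_abs abs_of_pos)
    moreover have "2*\<theta>^2 \<le> \<theta>" using th mult_left_mono[of \<theta> "1/2" \<theta>] by (simp add: power2_eq_square)
    ultimately show ?thesis using h unfolding W_def by linarith
  qed
  finally show ?thesis .
qed

lemma continuous_on_height: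
  assumes "continuous_on S \<gamma>" "\<gamma> ` S \<subseteq> H3"
  shows "continuous_on S (\<lambda>s. height (\<gamma> s))"
proof (rule continuous_on_eq)
  show "continuous_on S (\<lambda>s. (mink (\<gamma> s) e0)^2 - (- mink (\<gamma> s) e1)^2 - 1)"
    by (intro continuous_intros continuous_on_mink assms(1))
  show "(mink (\<gamma> s) e0)^2 - (- mink (\<gamma> s) e1)^2 - 1 = height (\<gamma> s)" if "s \<in> S" for s
    using coord_sq_diff_H3[of "\<gamma> s"] assms(2) that by (auto simp: coord0_def coord1_def)
qed

lemma continuous_on_axial_param:
  assumes "continuous_on S \<gamma>" "\<gamma> ` S \<subseteq> H3"
  shows "continuous_on S (\<lambda>s. axial_param (\<gamma> s))"
proof (rule continuous_on_eq)
  have "0 < mink (\<gamma> s) e0 - mink (\<gamma> s) e1" "0 < mink (\<gamma> s) e0 + mink (\<gamma> s) e1" if "s \<in> S" for s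
    using coord0_pm_coord1_pos[of "\<gamma> s"] assms(2) that by (auto simp: coord0_def coord1_def)
  thus "continuous_on S (\<lambda>s. (ln (mink (\<gamma> s) e0 - mink (\<gamma> s) e1)
      - ln (mink (\<gamma> s) e0 + mink (\<gamma> s) e1)) / 2)"
    by (intro continuous_intros continuous_on_mink assms(1)) (auto simp: less_imp_neq[symmetric])
  show "(ln (mink (\<gamma> s) e0 - mink (\<gamma> s) e1) - ln (mink (\<gamma> s) e0 + mink (\<gamma> s) e1)) / 2
      = axial_param (\<gamma> s)" for s
    by (simp add: axial_param_def coord0_def coord1_def)
qed

lemma height_convex_comb_le:
  assumes hu: "height u \<le> h" and hv: "height v \<le> h" and ab: "0 \<le> \<alpha>" "0 \<le> \<beta>" "\<alpha> + \<beta> \<le> 1"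
  shows "height (\<alpha> *\<^sub>R u + \<beta> *\<^sub>R v) \<le> h"
proof -
  define m where "m = mink (normal_part u) (normal_part v)"
  have h0: "0 \<le> h" using order_trans[OF height_nonneg hu] .
  have "- m \<le> sqrt (height u * height v)" using abs_mink_normal_part_le[of u v] by (simp add: m_def)
  also have "\<dots> \<le> sqrt (h * h)"
    using hu hv h0 height_nonneg by (intro real_sqrt_le_mono mult_mono) auto
  finally have m: "- m \<le> h" using h0 by simp
  have "height (\<alpha> *\<^sub>R u + \<beta> *\<^sub>R v) = \<alpha>^2 * height u + \<beta>^2 * height v + 2 * \<alpha> * \<beta> * (- m)"
    unfolding height_def normal_part_lincomb m_def
    by (simp add: mink_bilinear mink_commute[of "normal_part v" "normal_part u"] power2_eq_square algebra_simps)
  also have "\<dots> \<le> \<alpha>^2 * h + \<beta>^2 * h + 2 * \<alpha> * \<beta> * h"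
    using hu hv m ab by (intro add_mono mult_left_mono) auto
  also have "\<dots> = (\<alpha> + \<beta>)^2 * h" by (simp add: power2_eq_square algebra_simps)
  also have "\<dots> \<le> h" using ab h0 power_le_one[of "\<alpha> + \<beta>" 2] mult_right_mono[of "(\<alpha> + \<beta>)^2" 1 h] by simp
  finally show ?thesis .
qed

lemma mink_ge_of_height_gap:
  assumes x: "x \<in> H3" "height x = 4*\<theta>^2" and c: "c \<in> H3" "height c \<le> \<theta>^2"
    and th: "0 < \<theta>" "\<theta> \<le> 1/2"
  shows "1 + \<theta>^2/12 \<le> mink x c"
proof -
  define B where "B = sqrt (height c)"
  have B: "0 \<le> B" "B \<le> \<theta>" "B^2 = height c"
    using c th height_nonneg[of c] by (auto simp: B_def real_sqrt_le_iff intro: real_le_lsqrt)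
  have "1 + \<theta>^2/12 \<le> sqrt ((1 + 4*\<theta>^2) * (1 + B^2)) - 2*\<theta>*B"
    by (rule sqrt_prod_sub_ge[OF th B(1,2)])
  also have "\<dots> \<le> sqrt ((1 + height x) * (1 + height c)) * cosh (axial_param x - axial_param c)
      - sqrt (height x * height c)"
  proof -
    have "sqrt (height x * height c) = 2*\<theta>*B"
      using x th by (simp add: B_def real_sqrt_mult)
    moreover have "sqrt ((1 + height x) * (1 + height c)) * 1
        \<le> sqrt ((1 + height x) * (1 + height c)) * cosh (axial_param x - axial_param c)"
      using height_nonneg[of x] height_nonneg[of c] by (intro mult_left_mono cosh_real_ge_1) simp
    ultimately show ?thesis using x B by simp
  qed
  also have "\<dots> \<le> mink x c" using mink_H3_approx[OF x(1) c(1)] by (simp add: abs_le_iff)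
  finally show ?thesis .
qed

lemma quasigeodesic_excursion_long:
  assumes q: "quasigeodesic \<delta> n \<gamma>" and dl: "0 < \<delta>" "\<delta> \<le> 1"
    and th: "0 < \<theta>" "\<theta> \<le> 1/2"
    and ts: "0 \<le> a" "a \<le> t" "t \<le> b" "b \<le> n"
    and ha: "height (\<gamma> a) \<le> \<theta>^2" and hb: "height (\<gamma> b) \<le> \<theta>^2" and ht: "height (\<gamma> t) = 4*\<theta>^2"
  shows "\<theta>^2/24 \<le> \<delta> * (b - a) + 3/2 * \<delta>"
proof -
  have H: "\<gamma> t \<in> H3" "\<gamma> a \<in> H3" "\<gamma> b \<in> H3" using quasigeodesic_H3[OF q] ts by auto
  obtain c \<alpha> \<beta> where c: "c \<in> H3" "c = \<alpha> *\<^sub>R \<gamma> a + \<beta> *\<^sub>R \<gamma> b" "0 \<le> \<alpha>" "0 \<le> \<beta>" "\<alpha> + \<beta> \<le> 1"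
    and mc: "mink (\<gamma> t) c \<le> exp (\<bar>hdist (\<gamma> t) (\<gamma> a) + hdist (\<gamma> t) (\<gamma> b) - hdist (\<gamma> a) (\<gamma> b)\<bar> / 2)"
    using exists_segment_point_mink_le[OF H] by blast
  have "1 + \<theta>^2/12 \<le> mink (\<gamma> t) c"
    using mink_ge_of_height_gap[OF H(1) ht c(1) _ th] height_convex_comb_le[OF ha hb c(3-5)] c(2)
    by simp
  also have "\<dots> \<le> exp (\<delta> * (b - a) + 3/2 * \<delta>)"
    using quasigeodesic_gromov_defect[OF q _ ts] dl by (intro order_trans[OF mc]) simp
  finally have "ln (1 + \<theta>^2/12) \<le> \<delta> * (b - a) + 3/2 * \<delta>"
    by (metis exp_gt_zero ln_exp ln_le_cancel_iff add_pos_nonneg zero_less_one zero_le_divide_iff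
        zero_le_power2 zero_le_numeral)
  moreover have "\<theta>^2/12/2 \<le> ln (1 + \<theta>^2/12)"
  proof (rule half_le_ln_one_plus)
    have "\<theta> * \<theta> \<le> 1/2 * (1/2)" using th by (intro mult_mono) auto
    thus "\<theta>^2/12 \<le> 1/2" by (simp add: power2_eq_square)
  qed simp
  ultimately show ?thesis by simp
qed

lemma axial_param_diff_le:
  assumes H: "x \<in> H3" "z \<in> H3" and th: "0 < \<theta>" "\<theta> \<le> 1/2"
    and h: "\<theta>^2 \<le> height x" "\<theta>^2 \<le> height z" and d: "1/2 \<le> hdist x z" "hdist x z \<le> 3"
  shows "\<bar>axial_param z - axial_param x\<bar> \<le> hdist x z - \<theta>^2 / 200"
proof (rule le_sub_of_cosh_stretch[OF th d])
  define v where "v = \<bar>axial_param z - axial_param x\<bar>"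
  have v: "cosh (axial_param x - axial_param z) = cosh v"
    unfolding v_def by (metis cosh_minus cosh_real_abs minus_diff_eq)
  have "(1 + \<theta>^2) * (cosh v - 1) + 1
      \<le> sqrt ((1 + height x) * (1 + height z)) * cosh v - sqrt (height x * height z)"
    by (rule sqrt_prod_mult_sub_ge[OF h cosh_real_ge_1])
  also have "\<dots> \<le> cosh (hdist x z)"
    using mink_H3_approx[OF H] cosh_hdist[OF H] v by (simp add: abs_le_iff)
  finally show "(1 + \<theta>^2) * (cosh v - 1) + 1 \<le> cosh (hdist x z)" .
qed simp

lemma hdist_le_axial_param_diff:
  assumes H: "x \<in> H3" "z \<in> H3" and h: "height x = \<theta>^2" "height z = \<theta>^2" and th: "\<theta>^2 \<le> 1/4"
  shows "hdist x z \<le> \<bar>axial_param x - axial_param z\<bar> + 2"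
proof -
  define \<Delta> where "\<Delta> = axial_param x - axial_param z"
  have "exp (hdist x z) / 2 \<le> cosh (hdist x z)" by (simp add: cosh_field_def)
  also have "\<dots> \<le> (1 + \<theta>^2) * cosh \<Delta> + \<theta>^2"
    using mink_H3_approx[OF H] cosh_hdist[OF H] h
    by (simp add: abs_le_iff \<Delta>_def real_sqrt_mult power2_eq_square)
  also have "\<dots> \<le> (1 + \<theta>^2) * cosh \<Delta> + \<theta>^2 * cosh \<Delta>"
    using mult_left_mono[OF cosh_real_ge_1[of \<Delta>], of "\<theta>^2"] by simp
  also have "\<dots> = (1 + 2*\<theta>^2) * cosh \<Delta>" by (simp add: algebra_simps)
  also have "\<dots> \<le> (1 + 2*\<theta>^2) * exp \<bar>\<Delta>\<bar>"
    using cosh_le_exp_abs[of \<Delta>] by (intro mult_left_mono) auto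
  also have "\<dots> \<le> exp 2 / 2 * exp \<bar>\<Delta>\<bar>"
    using th exp_ge_add_one_self[of "2::real"] by (intro mult_right_mono) auto
  finally have "exp (hdist x z) \<le> exp (\<bar>\<Delta>\<bar> + 2)" by (simp add: exp_add mult.commute)
  thus ?thesis by (simp add: \<Delta>_def)
qed

lemma quasigeodesic_axial_step_le:
  assumes q: "quasigeodesic \<delta> n \<gamma>" and dl: "0 < \<delta>" "\<delta> \<le> 1/8000" and th: "0 < \<theta>" "\<theta> \<le> 1/2"
    and i: "s \<in> {0..n}" "t \<in> {0..n}" and st: "1 \<le> t - s" "t - s \<le> 2"
    and h: "\<theta>^2 \<le> height (\<gamma> s)" "\<theta>^2 \<le> height (\<gamma> t)"
  shows "\<bar>axial_param (\<gamma> t) - axial_param (\<gamma> s)\<bar> \<le> (1 + \<delta>) * (t - s) + \<delta> - \<theta>^2/200"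
proof -
  define d where "d = hdist (\<gamma> s) (\<gamma> t)"
  have up: "d \<le> (1 + \<delta>) * (t - s) + \<delta>" using quasigeodesic_hdist_le[OF q i] st by (simp add: d_def)
  have "(t - s) * (1 - \<delta>) \<le> (t - s) / (1 + \<delta>)"
    using st dl by (intro mult_one_minus_le_divide_one_plus) auto
  moreover have "1 - \<delta> \<le> (t - s) * (1 - \<delta>)" using st dl mult_right_mono[of 1 "t - s" "1 - \<delta>"] by simp
  moreover have "(t - s) / (1 + \<delta>) - \<delta> \<le> d"
    using quasigeodesic_hdist_ge[OF q i] st by (simp add: d_def abs_minus_commute)
  ultimately have "1/2 \<le> d" using dl by linarith
  moreover have "d \<le> 3"
    using up st dl mult_mono[of "1 + \<delta>" "1 + 1/8000" "t - s" 2] by simp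
  ultimately show ?thesis
    using axial_param_diff_le[OF quasigeodesic_H3[OF q i(1)] quasigeodesic_H3[OF q i(2)] th h] up
    by (simp add: d_def)
qed

lemma quasigeodesic_excursion_short:
  assumes q: "quasigeodesic \<delta> n \<gamma>" and dl: "0 < \<delta>" "\<delta> \<le> \<theta>^2/2000"
    and th: "0 < \<theta>" "\<theta> \<le> 1/2" and ab: "0 \<le> a" "a \<le> b" "b \<le> n"
    and ha: "height (\<gamma> a) = \<theta>^2" and hb: "height (\<gamma> b) = \<theta>^2"
    and above: "\<And>s. s \<in> {a..b} \<Longrightarrow> \<theta>^2 \<le> height (\<gamma> s)"
  shows "(b - a) * \<theta>^2 \<le> 2400"
proof -
  define T where "T = b - a"
  have "\<theta> * \<theta> \<le> 1/2 * (1/2)" using th by (intro mult_mono) auto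
  hence t2: "\<theta>^2 \<le> 1/4" by (simp add: power2_eq_square)
  show ?thesis
  proof (cases "1 \<le> T")
    case False
    thus ?thesis using t2 zero_le_power2[of \<theta>] mult_mono[of T 1 "\<theta>^2" "1/4"] ab
      by (simp add: T_def)
  next
    case True
    obtain k :: nat and \<sigma> where k: "T / 2 \<le> real k" and \<sigma>: "1 \<le> \<sigma>" "\<sigma> \<le> 2" "real k * \<sigma> = T"
      using exists_equal_subdivision[OF True] .
    define s where "s i = axial_param (\<gamma> (a + real i * \<sigma>))" for i :: nat
    have in_ab: "a + real i * \<sigma> \<in> {a..b}" if "i \<le> k" for i
      using \<sigma> mult_right_mono[of "real i" "real k" \<sigma>] that by (auto simp: T_def)
    have "\<bar>s (Suc i) - s i\<bar> \<le> (1 + \<delta>) * \<sigma> + \<delta> - \<theta>^2/200" if "i < k" for i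
      using quasigeodesic_axial_step_le[OF q dl(1) _ th, of "a + real i * \<sigma>" "a + real (Suc i) * \<sigma>"]
        in_ab[of i] in_ab[of "Suc i"] above[of "a + real i * \<sigma>"] above[of "a + real (Suc i) * \<sigma>"]
        that \<sigma> dl t2 ab
      by (simp add: s_def algebra_simps)
    hence "\<bar>s k - s 0\<bar> \<le> real k * ((1 + \<delta>) * \<sigma> + \<delta> - \<theta>^2/200)" by (rule abs_telescope_le)
    moreover have "s k = axial_param (\<gamma> b)" "s 0 = axial_param (\<gamma> a)"
      using \<sigma> by (simp_all add: s_def T_def)
    moreover have "hdist (\<gamma> a) (\<gamma> b) \<le> \<bar>axial_param (\<gamma> a) - axial_param (\<gamma> b)\<bar> + 2"
      using hdist_le_axial_param_diff[OF quasigeodesic_H3[OF q] quasigeodesic_H3[OF q] ha hb t2] ab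
      by simp
    moreover have "T * (1 - \<delta>) - \<delta> \<le> hdist (\<gamma> a) (\<gamma> b)"
      using quasigeodesic_hdist_ge[of \<delta> n \<gamma> a b] q ab dl
        mult_one_minus_le_divide_one_plus[of T \<delta>] True by (simp add: T_def)
    moreover have "real k * (\<delta> - \<theta>^2/200) \<le> T / 2 * (\<delta> - \<theta>^2/200)"
      using k dl th by (intro mult_right_mono_neg) auto
    moreover have "T * \<delta> \<le> T * (\<theta>^2/2000)" using dl True by (intro mult_left_mono) auto
    ultimately have "T * \<theta>^2 / 800 \<le> 2 + \<delta>"
      using \<sigma>(3) by (simp add: abs_minus_commute algebra_simps)
    thus ?thesis using dl t2 by (simp add: T_def)
  qed
qed

lemma quasigeodesic_height_lt:
  assumes q: "quasigeodesic \<delta> n \<gamma>" and th: "0 < \<theta>" "\<theta> \<le> 1/100000" and dl: "\<delta> = \<theta>^5"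
    and h0: "height (\<gamma> 0) = 0" and hn: "height (\<gamma> n) = 0" and t: "t \<in> {0..n}"
  shows "height (\<gamma> t) < 4*\<theta>^2"
proof (rule ccontr)
  assume high: "\<not> height (\<gamma> t) < 4*\<theta>^2"
  define w where "w s = height (\<gamma> s)" for s
  have wc: "continuous_on {x..y} w" if "0 \<le> x" "y \<le> n" for x y
    using continuous_on_subset[OF continuous_on_height, of "{0..n}" \<gamma>] q that
    by (auto simp: w_def quasigeodesic_def)
  have t2: "0 < \<theta>^2" "\<theta>^2 \<le> 1" using th by (simp_all add: power_le_one)
  have d: "0 < \<delta>" "\<delta> \<le> \<theta>^2/2000" "\<delta> \<le> 1" using small_power_5_le[OF th] zero_less_power[OF th(1), of 5] t2 unfolding dl by linarith+
  obtain t0 where t0: "0 \<le> t0" "t0 \<le> t" "w t0 = 4*\<theta>^2"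
    using IVT'[of w 0 "4*\<theta>^2" t] wc[of 0 t] t h0 high t2 by (auto simp: w_def)
  have w: "w 0 \<le> \<theta>^2" "\<theta>^2 \<le> w t0" "w n \<le> \<theta>^2" using h0 hn t0 t2 by (simp_all add: w_def)
  obtain a where a: "0 \<le> a" "a \<le> t0" "w a = \<theta>^2" "\<And>s. a \<le> s \<Longrightarrow> s \<le> t0 \<Longrightarrow> \<theta>^2 \<le> w s"
    using last_crossing[OF wc[of 0 t0] t0(1) w(1,2)] t0 t by auto
  obtain b where b: "t0 \<le> b" "b \<le> n" "w b = \<theta>^2" "\<And>s. t0 \<le> s \<Longrightarrow> s \<le> b \<Longrightarrow> \<theta>^2 \<le> w s"
    using first_crossing[OF wc[of t0 n] _ w(2,3)] t0 t by auto
  have above: "\<theta>^2 \<le> height (\<gamma> s)" if "s \<in> {a..b}" for s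
    using a(4)[of s] b(4)[of s] that by (cases "s \<le> t0") (auto simp: w_def)
  have "\<theta>^2/24 \<le> \<delta> * (b - a) + 3/2 * \<delta>"
    using quasigeodesic_excursion_long[OF q d(1,3) th(1) _ a(1,2) b(1,2)] a(3) b(3) t0(3) th
    by (simp add: w_def)
  moreover have "(b - a) * \<theta>^2 \<le> 2400"
    using quasigeodesic_excursion_short[OF q d(1,2) th(1) _ a(1) _ b(2) _ _ above] a(2,3) b(1,3) t0 th
    by (simp add: w_def)
  ultimately show False using small_power_5_excursion_lt[OF th, of "b - a"] a b dl by (simp add: mult.commute)
qed

lemma coord_axis: "coord0 (axis \<tau>) = cosh \<tau>" "coord1 (axis \<tau>) = sinh \<tau>"
  by (simp_all add: axis_def coord0_def coord1_def mink_bilinear mink_e0_e0 mink_e1_e1 mink_e0_e1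
      mink_commute[of e1 e0])

lemma height_axis: "height (axis \<tau>) = 0"
  unfolding height_def normal_part_def coord_axis by (simp add: axis_def mink_def)

lemma axial_param_axis: "axial_param (axis \<tau>) = \<tau>"
  by (simp add: axial_param_def coord_axis cosh_plus_sinh cosh_minus_sinh)

lemma quasigeodesic_near_axis:
  assumes q: "quasigeodesic \<delta> n \<gamma>" and th: "0 < \<theta>" "\<theta> \<le> 1/100000" and dl: "\<delta> = \<theta>^5"
    and L: "0 \<le> L" and ends: "\<gamma> 0 = axis 0" "\<gamma> n = axis L" and t: "t \<in> {0..n}"
  shows "\<exists>\<tau>\<in>{0..L}. hdist (\<gamma> t) (axis \<tau>) < 5*\<theta>"
proof -
  define \<sigma> where "\<sigma> s = axial_param (\<gamma> s)" for s
  have i: "0 \<in> {0..n}" "n \<in> {0..n}" using t by auto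
  have \<sigma>_ends: "\<sigma> 0 = 0" "\<sigma> n = L" using ends by (simp_all add: \<sigma>_def axial_param_axis)
  have \<sigma>c: "continuous_on {x..y} \<sigma>" if "0 \<le> x" "y \<le> n" for x y
    using continuous_on_subset[OF continuous_on_axial_param, of "{0..n}" \<gamma>] q that
    by (auto simp: \<sigma>_def quasigeodesic_def)
  have near: "hdist (\<gamma> s) (axis (\<sigma> s)) < 3*\<theta>" if "s \<in> {0..n}" for s
    unfolding \<sigma>_def using quasigeodesic_height_lt[OF q th dl _ _ that] ends th
    by (intro hdist_axis_lt quasigeodesic_H3[OF q that]) (simp_all add: height_axis)
  have between: "hdist (\<gamma> t) (\<gamma> s) < 5*\<theta>"
    if "s \<in> {0..n}" "u \<in> {0..n}" "\<bar>t - s\<bar> \<le> \<bar>u - s\<bar>" "hdist (\<gamma> u) (\<gamma> s) < 3*\<theta>" for s u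
    using quasigeodesic_hdist_lt_of_between[OF q _ that(1) t that(2-4)] small_power_5_tracking_lt[OF th dl] th
    by (simp add: dl)
  consider "\<sigma> t < 0" | "0 \<le> \<sigma> t" "\<sigma> t \<le> L" | "L < \<sigma> t" by linarith
  thus ?thesis
  proof cases
    case 1
    then obtain u where u: "t \<le> u" "u \<le> n" "\<sigma> u = 0"
      using IVT'[of \<sigma> t 0 n] \<sigma>c[of t n] \<sigma>_ends t L by auto
    hence "hdist (\<gamma> t) (\<gamma> 0) < 5*\<theta>" using between[OF i(1), of u] near[of u] t ends by simp
    thus ?thesis using ends L by auto
  next
    case 2
    thus ?thesis using near[OF t] th by (intro bexI[of _ "\<sigma> t"]) auto
  next
    case 3
    then obtain u where u: "0 \<le> u" "u \<le> t" "\<sigma> u = L"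
      using IVT'[of \<sigma> 0 L t] \<sigma>c[of 0 t] \<sigma>_ends t L by auto
    hence "hdist (\<gamma> t) (\<gamma> n) < 5*\<theta>" using between[OF i(2), of u] near[of u] t ends by simp
    thus ?thesis using ends L by auto
  qed
qed

end

section \<open>The tracking theorem\<close>

lemma geodesic_segment_frame:
  assumes p: "p \<in> H3" and q: "q \<in> H3" and pq: "p \<noteq> q"
  obtains e1 where "hyperbolic_frame p e1" "hyperbolic_frame.axis p e1 0 = p"
    "hyperbolic_frame.axis p e1 (hdist p q) = q"
    "geodesic_segment p q = hyperbolic_frame.axis p e1 ` {0..hdist p q}"
proof -
  define L where "L = hdist p q"
  define e1 where "e1 = (1 / sinh L) *\<^sub>R (q - cosh L *\<^sub>R p)"
  have L: "0 < L" using hdist_pos[OF p q pq] by (simp add: L_def)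
  have mpq: "mink p q = cosh L" using cosh_hdist[OF p q] by (simp add: L_def)
  have "mink e1 e1 = (1 / sinh L)^2 * (mink q q - 2 * cosh L * mink p q + (cosh L)^2 * mink p p)"
    by (simp add: e1_def mink_bilinear mink_commute[of q p] power2_eq_square algebra_simps)
  also have "\<dots> = (1 - (cosh L)^2) / (sinh L)^2"
    using mpq p q by (simp add: H3_def power2_eq_square field_simps)
  finally have "mink e1 e1 = -1" using L by (simp add: cosh_square_eq)
  moreover have "mink p e1 = 0" using mpq p by (simp add: e1_def mink_bilinear H3_def)
  ultimately interpret hyperbolic_frame p e1 by unfold_locales (use p in auto)
  have q_eq: "q = cosh L *\<^sub>R p + sinh L *\<^sub>R e1" using L by (simp add: e1_def)
  have "geod_point p q t = axis (t * L)" for t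
  proof -
    have "geod_point p q t = (sinh ((1 - t) * L) / sinh L) *\<^sub>R p + (sinh (t * L) / sinh L) *\<^sub>R q"
      by (simp add: geod_point_def Let_def L_def)
    also have "\<dots> = ((sinh ((1 - t) * L) + sinh (t * L) * cosh L) / sinh L) *\<^sub>R p + sinh (t * L) *\<^sub>R e1"
      using L by (subst q_eq) (simp add: scaleR_add_right add_divide_distrib scaleR_add_left)
    also have "(sinh ((1 - t) * L) + sinh (t * L) * cosh L) / sinh L = cosh (t * L)"
      using L by (simp add: left_diff_distrib sinh_diff field_simps)
    finally show ?thesis by (simp add: axis_def)
  qed
  hence "geod_point p q = axis \<circ> (*) L" by (auto simp: mult.commute)
  hence "geodesic_segment p q = axis ` (*) L ` {0..1}"
    using geodesic_segment_eq_image[OF pq] by (simp only: image_comp)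
  also have "(*) L ` {0..1} = {0..L}" using L by simp
  finally show ?thesis
    using that[of e1] hyperbolic_frame_axioms q_eq unfolding L_def by (simp add: axis_def)
qed

lemma quasigeodesic_in_nbhd_segment:
  assumes q: "quasigeodesic \<delta> n \<gamma>" and n: "0 \<le> n"
    and th: "0 < \<theta>" "\<theta> \<le> 1/100000" and dl: "\<delta> = \<theta>^5"
  shows "\<gamma> ` {0..n} \<subseteq> hnbhd (5*\<theta>) (geodesic_segment (\<gamma> 0) (\<gamma> n))"
proof (cases "\<gamma> 0 = \<gamma> n")
  case True
  have i: "0 \<in> {0..n}" "n \<in> {0..n}" using n by auto
  have "hdist (\<gamma> n) (\<gamma> 0) < 3*\<theta>" using True hdist_self[OF quasigeodesic_H3[OF q i(1)]] th by simp
  hence "hdist (\<gamma> t) (\<gamma> 0) < 5*\<theta>" if t: "t \<in> {0..n}" for t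
    using quasigeodesic_hdist_lt_of_between[OF q _ i(1) t i(2)] small_power_5_tracking_lt[OF th dl] th t
    unfolding dl by fastforce
  thus ?thesis using True quasigeodesic_H3[OF q] by (auto simp: hnbhd_def geodesic_segment_def)
next
  case False
  have ends: "\<gamma> 0 \<in> H3" "\<gamma> n \<in> H3" using quasigeodesic_H3[OF q] n by auto
  obtain e1 where fr: "hyperbolic_frame (\<gamma> 0) e1"
    and ax: "hyperbolic_frame.axis (\<gamma> 0) e1 0 = \<gamma> 0"
      "hyperbolic_frame.axis (\<gamma> 0) e1 (hdist (\<gamma> 0) (\<gamma> n)) = \<gamma> n"
    and seg: "geodesic_segment (\<gamma> 0) (\<gamma> n)
      = hyperbolic_frame.axis (\<gamma> 0) e1 ` {0..hdist (\<gamma> 0) (\<gamma> n)}"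
    using geodesic_segment_frame[OF ends False] by blast
  interpret hyperbolic_frame "\<gamma> 0" e1 by (rule fr)
  have "\<exists>\<tau>\<in>{0..hdist (\<gamma> 0) (\<gamma> n)}. hdist (\<gamma> t) (axis \<tau>) < 5*\<theta>" if "t \<in> {0..n}" for t
    by (rule quasigeodesic_near_axis[OF q th dl hdist_nonneg[OF ends] ax[symmetric] that])
  thus ?thesis using quasigeodesic_H3[OF q] by (auto simp: hnbhd_def seg)
qed

theorem mainTheorem14:
  shows "\<exists>\<delta>0>0. \<forall>\<delta>. 0 < \<delta> \<and> \<delta> < \<delta>0 \<longrightarrow>
     (\<forall>(n::real) (\<gamma>::real \<Rightarrow> pt4). 0 \<le> n \<and> quasigeodesic \<delta> n \<gamma> \<longrightarrow>
        \<gamma> ` {0..n} \<subseteq> hnbhd (5 * \<delta> powr (1/5)) (geodesic_segment (\<gamma> 0) (\<gamma> n)))"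
proof (intro exI[of _ "(1/100000)^5 :: real"] conjI allI impI)
  fix \<delta> n :: real and \<gamma> :: "real \<Rightarrow> pt4"
  assume \<delta>: "0 < \<delta> \<and> \<delta> < (1/100000)^5" and q: "0 \<le> n \<and> quasigeodesic \<delta> n \<gamma>"
  define \<theta> where "\<theta> = \<delta> powr (1/5)"
  have th: "0 < \<theta>" using \<delta> by (simp add: \<theta>_def)
  have "\<theta>^5 = \<theta> powr (real 5)" using th by (simp add: powr_realpow)
  also have "\<dots> = \<delta>" using \<delta> by (simp add: \<theta>_def powr_powr)
  finally have dl: "\<delta> = \<theta>^5" ..
  have "\<theta> \<le> 1/100000"
  proof (rule ccontr)
    assume "\<not> \<theta> \<le> 1/100000"
    hence "(1/100000)^5 < \<theta>^5" by (intro power_strict_mono) auto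
    thus False using \<delta> dl by simp
  qed
  hence "\<gamma> ` {0..n} \<subseteq> hnbhd (5*\<theta>) (geodesic_segment (\<gamma> 0) (\<gamma> n))"
    using quasigeodesic_in_nbhd_segment[OF _ _ th _ dl] q by blast
  thus "\<gamma> ` {0..n} \<subseteq> hnbhd (5 * \<delta> powr (1/5)) (geodesic_segment (\<gamma> 0) (\<gamma> n))"
    by (simp add: \<theta>_def)
qed simp

end
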